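(* Let $G$ be a finite group with identity $e$, $R[G]$ its real group algebra, and $S=\{x\in R[G]: \sum_g x_g=1,\ x_g\ge0 \ \forall g\}$. For $x\in S$ let $n_x,G_x,c_x,m_x$ be as defined in the context, and let $S(x)$ be the set of all limits of all convergent subsequences of $(x^m)_{m\in\mathbb N}$. Then for every $x\in S$: $$xc_x=c_xx,\qquad S(x)=\{c_xx^r:\ 0\le r<m_x\}.$$ In particular $|S(x)|=1$, i.e. $S(x)=\{c_x\}$, if and only if $x\in R[G_x]$.
   Context: Elements of $R[G]$ are written $x=\sum_{g\in G}x_gg$; $\mathrm{Supp}(x)=\{g\in G: x_g\neq0\}$; $\mathbb N=\{1,2,\dots\}$; $R[G]$ carries the Euclidean topology. For $x\in S$: $n_x=\min\{k\in\mathbb N: (x^k)_e\ne0\}$; $G_x$ is the subgroup of $G$ generated by $\mathrm{Supp}(x^{n_x})$; $c_x=\frac1{|G_x|}\sum_{g\in G_x}g$; $m_x=\min\{k\in\mathbb N:\ \mathrm{Supp}(x^k)\subset G_x\}$. $R[G_x]$ denotes the subspace of $R[G]$ spanned by $G_x$. *)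

theory Defs
  imports "HOL-Analysis.Analysis" "HOL-Algebra.Generated_Groups"
begin

text \<open>Elements of the real group algebra R[G] of a (finite) group G (HOL-Algebra structure)
  are represented as functions carrier G \<rightarrow> real, extended by 0 outside the carrier.
  The space 'a \<Rightarrow> real carries the product topology, which on the finite-dimensional
  subspace R[G] is the Euclidean topology.\<close>

definition galg :: "('a, 'b) monoid_scheme \<Rightarrow> ('a \<Rightarrow> real) set" where
  "galg G = {x. \<forall>g. g \<notin> carrier G \<longrightarrow> x g = 0}"

definition gconv :: "('a, 'b) monoid_scheme \<Rightarrow> ('a \<Rightarrow> real) \<Rightarrow> ('a \<Rightarrow> real) \<Rightarrow> ('a \<Rightarrow> real)" where
  "gconv G x y = (\<lambda>g. if g \<in> carrier G
      then (\<Sum>h\<in>carrier G. x h * y (inv\<^bsub>G\<^esub> h \<otimes>\<^bsub>G\<^esub> g)) else 0)"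

definition gdelta :: "('a, 'b) monoid_scheme \<Rightarrow> 'a \<Rightarrow> ('a \<Rightarrow> real)" where
  "gdelta G a = (\<lambda>g. if g = a then 1 else 0)"

primrec gpow :: "('a, 'b) monoid_scheme \<Rightarrow> ('a \<Rightarrow> real) \<Rightarrow> nat \<Rightarrow> ('a \<Rightarrow> real)" where
  "gpow G x 0 = gdelta G \<one>\<^bsub>G\<^esub>"
| "gpow G x (Suc n) = gconv G (gpow G x n) x"

definition gsupp :: "('a, 'b) monoid_scheme \<Rightarrow> ('a \<Rightarrow> real) \<Rightarrow> 'a set" where
  "gsupp G x = {g \<in> carrier G. x g \<noteq> 0}"

definition simplexS :: "('a, 'b) monoid_scheme \<Rightarrow> ('a \<Rightarrow> real) set" where
  "simplexS G = {x \<in> galg G. (\<forall>g\<in>carrier G. x g \<ge> 0) \<and> (\<Sum>g\<in>carrier G. x g) = 1}"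

definition n_x :: "('a, 'b) monoid_scheme \<Rightarrow> ('a \<Rightarrow> real) \<Rightarrow> nat" where
  "n_x G x = (LEAST k. k \<ge> 1 \<and> gpow G x k \<one>\<^bsub>G\<^esub> \<noteq> 0)"

definition G_x :: "('a, 'b) monoid_scheme \<Rightarrow> ('a \<Rightarrow> real) \<Rightarrow> 'a set" where
  "G_x G x = generate G (gsupp G (gpow G x (n_x G x)))"

definition c_x :: "('a, 'b) monoid_scheme \<Rightarrow> ('a \<Rightarrow> real) \<Rightarrow> ('a \<Rightarrow> real)" where
  "c_x G x = (\<lambda>g. if g \<in> G_x G x then 1 / real (card (G_x G x)) else 0)"

definition m_x :: "('a, 'b) monoid_scheme \<Rightarrow> ('a \<Rightarrow> real) \<Rightarrow> nat" where
  "m_x G x = (LEAST k. k \<ge> 1 \<and> gsupp G (gpow G x k) \<subseteq> G_x G x)"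

definition galg_sub :: "('a, 'b) monoid_scheme \<Rightarrow> 'a set \<Rightarrow> ('a \<Rightarrow> real) set" where
  "galg_sub G H = {y \<in> galg G. \<forall>g. y g \<noteq> 0 \<longrightarrow> g \<in> H}"

definition limset :: "('a, 'b) monoid_scheme \<Rightarrow> ('a \<Rightarrow> real) \<Rightarrow> ('a \<Rightarrow> real) set" where
  "limset G x = {L. \<exists>r::nat \<Rightarrow> nat. strict_mono r \<and>
       (\<lambda>k. gpow G x (Suc (r k))) \<longlonglongrightarrow> L}"

end

theory Submission
  imports Defs "HOL-Algebra.Multiplicative_Group"
begin

text \<open>
  Let H = G_x. Since the support of x^(n_x) contains the unit, the supports of the powers
  x^(n_x j) increase and eventually equal H, so some power y = x^M is supported exactly on H.
  Such a y is a c_x + u with a > 0 and u \<ge> 0 of mass 1 - a supported on H; as c_x absorbs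
  every element of S supported on H, y^k = (1 - (1 - a)^k) c_x + u^k, which tends to c_x.
  Hence x^(M q + s) tends to c_x x^s; in particular x c_x = c_x x. Since x^(m_x) is supported
  on H, c_x x^s depends only on s mod m_x, so x^m - c_x x^(m mod m_x) tends to 0 and the limit
  points of (x^m) are exactly the c_x x^r with r < m_x. If x is not supported on H, the
  support H supp(x) of c_x x is larger than H, so c_x x \<noteq> c_x and S(x) is not a singleton.
\<close>

section \<open>Pointwise convergence of real functions\<close>

lemma tendsto_fun_iff:
  "((f :: 'c \<Rightarrow> 'a \<Rightarrow> real) \<longlongrightarrow> l) F \<longleftrightarrow> (\<forall>i. ((\<lambda>k. f k i) \<longlongrightarrow> l i) F)"
proof -
  have "(f \<longlongrightarrow> l) F \<longleftrightarrow> limitin (product_topology (\<lambda>_. euclidean) UNIV) f l F"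
    by (simp only: euclidean_product_topology) simp
  also have "\<dots> \<longleftrightarrow> (\<forall>i. ((\<lambda>k. f k i) \<longlongrightarrow> l i) F)"
    by (simp only: limitin_componentwise) simp
  finally show ?thesis .
qed

lemma Hausdorff_space_fun: "Hausdorff_space (euclidean :: ('a \<Rightarrow> real) topology)"
  by (metis euclidean_product_topology Hausdorff_space_product_topology Hausdorff_space_euclidean)

lemma tendsto_fun_unique:
  "((f :: 'c \<Rightarrow> 'a \<Rightarrow> real) \<longlongrightarrow> l1) F \<Longrightarrow> (f \<longlongrightarrow> l2) F \<Longrightarrow> F \<noteq> bot \<Longrightarrow> l1 = l2"
  using limitin_Hausdorff_unique[OF _ _ _ Hausdorff_space_fun, of f l1 F l2] by simp

section \<open>Subgroups of a finite group\<close>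

lemma (in group) subgroupI_finite:
  assumes "finite (carrier G)" and "S \<subseteq> carrier G" and "S \<noteq> {}"
    and mult: "\<And>a b. a \<in> S \<Longrightarrow> b \<in> S \<Longrightarrow> a \<otimes> b \<in> S"
  shows "subgroup S G"
proof (rule subgroupI)
  fix a assume a: "a \<in> S"
  then have a_carrier: "a \<in> carrier G" using assms(2) by blast
  have pow_Suc: "a [^] Suc k \<in> S" for k
    by (induction k) (use a a_carrier mult in auto)
  have order: "order G = Suc (order G - 1)"
    using assms(1) order_gt_0_iff_finite by simp
  have one: "\<one> \<in> S"
    using pow_Suc[of "order G - 1"] pow_order_eq_1[OF a_carrier] order by simp
  have "a [^] (order G - 1) \<in> S"
    using one pow_Suc by (cases "order G - 1") auto
  moreover have "inv a = a [^] (order G - 1)"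
    using pow_order_eq_1[OF a_carrier] order a_carrier
    by (intro inv_equality) (metis nat_pow_Suc, simp_all)
  ultimately show "inv a \<in> S" by simp
qed (use assms in auto)

lemma (in group) set_mult_additive_family_mono:
  fixes Q :: "nat \<Rightarrow> 'a set"
  assumes sub: "\<And>i. Q i \<subseteq> carrier G"
    and add: "\<And>i j. Q (i + j) = Q i <#> Q j"
    and one: "\<one> \<in> Q 1"
    and "i \<le> j"
  shows "Q i \<subseteq> Q j"
proof (rule lift_Suc_mono_le[OF _ \<open>i \<le> j\<close>])
  fix n
  show "Q n \<subseteq> Q (Suc n)"
  proof
    fix q assume q: "q \<in> Q n"
    then have "q \<otimes> \<one> \<in> Q n <#> Q 1" using one by (auto simp: set_mult_def)
    then show "q \<in> Q (Suc n)" using add[of n 1] subsetD[OF sub q] by simp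
  qed
qed

text \<open>The sets Q i increase, so by finiteness Q j = Q (Suc j) for some j \<ge> 1; then
  Q j = Q (j + j) = Q j <#> Q j is closed under products, hence a subgroup.\<close>
lemma (in group) set_mult_additive_family_reaches_generate:
  fixes Q :: "nat \<Rightarrow> 'a set"
  assumes fin: "finite (carrier G)"
    and sub: "\<And>i. Q i \<subseteq> carrier G"
    and add: "\<And>i j. Q (i + j) = Q i <#> Q j"
    and one: "\<one> \<in> Q 1"
  shows "\<exists>j\<ge>1. Q j = generate G (Q 1)"
proof -
  note mono = set_mult_additive_family_mono[OF sub add one]
  obtain j where j: "j \<ge> 1" and j_max: "\<And>i. i \<ge> 1 \<Longrightarrow> card (Q i) \<le> card (Q j)"
    using ex_has_greatest_nat[of "\<lambda>i. i \<ge> 1" 1 "\<lambda>i. card (Q i)" "Suc (card (carrier G))"]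
      card_mono[OF fin sub] by (auto simp: le_imp_less_Suc)
  have step: "Q (Suc j) = Q j"
    using card_seteq[OF finite_subset[OF sub fin] mono[of j "Suc j"]] j j_max[of "Suc j"]
    by simp
  have stable: "Q (j + i) = Q j" for i
  proof (induction i)
    case (Suc i)
    have "Q (j + Suc i) = Q (j + i) <#> Q 1" using add[of "j + i" 1] by simp
    also have "\<dots> = Q (Suc j)" using Suc add[of j 1] by simp
    finally show ?case using step by simp
  qed simp
  have "Q j = generate G (Q 1)"
  proof (rule generateI)
    show "subgroup (Q j) G"
    proof (rule subgroupI_finite[OF fin sub])
      show "Q j \<noteq> {}" using one mono[OF j] by blast
      fix a b assume "a \<in> Q j" "b \<in> Q j"
      then have "a \<otimes> b \<in> Q j <#> Q j" by (auto simp: set_mult_def)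
      then show "a \<otimes> b \<in> Q j" using add[of j j] stable[of j] by simp
    qed
    show "Q 1 \<subseteq> Q j" using mono[OF j] .
    fix K assume K: "subgroup K G" "Q 1 \<subseteq> K"
    have "Q (Suc i) \<subseteq> K" for i
    proof (induction i)
      case (Suc i)
      have "Q (Suc i) <#> Q 1 \<subseteq> K <#> K" using Suc K(2) by (rule mono_set_mult)
      then show ?case using add[of "Suc i" 1] subgroup_mult_id[OF K(1)] by simp
    qed (use K in simp)
    then show "Q j \<subseteq> K" using j by (cases j) auto
  qed
  then show ?thesis using j by blast
qed

section \<open>The group algebra\<close>

lemma gconv_outside: "g \<notin> carrier G \<Longrightarrow> gconv G x y g = 0"
  by (simp add: gconv_def)

lemma gconv_eq_sum:
  "g \<in> carrier G \<Longrightarrow> gconv G x y g = (\<Sum>h\<in>carrier G. x h * y (inv\<^bsub>G\<^esub> h \<otimes>\<^bsub>G\<^esub> g))"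
  by (simp add: gconv_def)

lemma gconv_in_galg: "gconv G x y \<in> galg G"
  by (simp add: galg_def gconv_outside)

lemma (in monoid) gpow_in_galg: "gpow G x k \<in> galg G"
  by (cases k) (auto simp: galg_def gdelta_def gconv_outside)

lemma galg_sub_eq: "galg_sub G H = {z \<in> galg G. gsupp G z \<subseteq> H}"
  by (auto simp: galg_sub_def galg_def gsupp_def)

lemma gconv_add_left: "gconv G (\<lambda>g. p g + q g) w = (\<lambda>g. gconv G p w g + gconv G q w g)"
  by (rule ext) (simp add: gconv_def distrib_right sum.distrib)

lemma gconv_add_right: "gconv G w (\<lambda>g. p g + q g) = (\<lambda>g. gconv G w p g + gconv G w q g)"
  by (rule ext) (simp add: gconv_def distrib_left sum.distrib)

lemma gconv_diff_left: "gconv G (\<lambda>g. p g - q g) w = (\<lambda>g. gconv G p w g - gconv G q w g)"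
  by (rule ext) (simp add: gconv_def left_diff_distrib sum_subtractf)

lemma gconv_scale_left: "gconv G (\<lambda>g. a * p g) w = (\<lambda>g. a * gconv G p w g)"
  by (rule ext) (simp add: gconv_def sum_distrib_left mult.assoc)

lemma gconv_scale_right: "gconv G w (\<lambda>g. a * p g) = (\<lambda>g. a * gconv G w p g)"
  by (rule ext) (simp add: gconv_def sum_distrib_left mult.left_commute)

lemma gconv_nonneg: "(\<And>g. 0 \<le> x g) \<Longrightarrow> (\<And>g. 0 \<le> y g) \<Longrightarrow> 0 \<le> gconv G x y g"
  by (simp add: gconv_def sum_nonneg)

lemma gpow_nonneg: "(\<And>g. 0 \<le> x g) \<Longrightarrow> 0 \<le> gpow G x k g"
  by (induction k arbitrary: g) (simp_all add: gdelta_def gconv_nonneg)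

lemma simplexS_nonneg: "x \<in> simplexS G \<Longrightarrow> 0 \<le> x g"
  by (cases "g \<in> carrier G") (auto simp: simplexS_def galg_def)

lemma abs_gconv_le: "(\<And>h. \<bar>y h\<bar> \<le> 1) \<Longrightarrow> \<bar>gconv G x y g\<bar> \<le> (\<Sum>h\<in>carrier G. \<bar>x h\<bar>)"
  unfolding gconv_def
  by (auto intro!: order.trans[OF sum_abs] sum_mono simp: abs_mult mult_left_le)

lemma tendsto_gconv:
  "(f \<longlongrightarrow> p) F \<Longrightarrow> (h \<longlongrightarrow> q) F \<Longrightarrow> ((\<lambda>k. gconv G (f k) (h k)) \<longlongrightarrow> gconv G p q) F"
  unfolding tendsto_fun_iff gconv_def by (auto intro!: tendsto_intros)

lemma (in group) sum_carrier_translate: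
  "a \<in> carrier G \<Longrightarrow> (\<Sum>h\<in>carrier G. f (a \<otimes> h)) = (\<Sum>h\<in>carrier G. f h)"
  by (rule sum.reindex_bij_witness[where i="\<lambda>h. inv a \<otimes> h" and j="\<lambda>h. a \<otimes> h"])
    (auto simp: m_assoc[symmetric])

lemma (in group) gconv_eq_sum_right:
  "g \<in> carrier G \<Longrightarrow> gconv G x y g = (\<Sum>k\<in>carrier G. x (g \<otimes> inv k) * y k)"
  unfolding gconv_eq_sum
  by (rule sum.reindex_bij_witness[where i="\<lambda>k. g \<otimes> inv k" and j="\<lambda>h. inv h \<otimes> g"])
    (auto simp: inv_mult_group m_assoc[symmetric], simp add: m_assoc)

lemma (in group) gsupp_gconv_subset: "gsupp G (gconv G x y) \<subseteq> gsupp G x <#> gsupp G y"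
proof
  fix g assume "g \<in> gsupp G (gconv G x y)"
  then have g: "g \<in> carrier G" "(\<Sum>h\<in>carrier G. x h * y (inv h \<otimes> g)) \<noteq> 0"
    by (auto simp: gsupp_def gconv_eq_sum)
  obtain h where h: "h \<in> carrier G" "x h * y (inv h \<otimes> g) \<noteq> 0"
    using g(2) by (rule sum.not_neutral_contains_not_neutral)
  then have "h \<in> gsupp G x" "inv h \<otimes> g \<in> gsupp G y"
    using g by (auto simp: gsupp_def)
  moreover have "g = h \<otimes> (inv h \<otimes> g)"
    using g h by (simp add: m_assoc[symmetric])
  ultimately show "g \<in> gsupp G x <#> gsupp G y"
    unfolding set_mult_def by blast
qed

lemma (in group) gconv_in_galg_sub:
  "subgroup H G \<Longrightarrow> x \<in> galg_sub G H \<Longrightarrow> y \<in> galg_sub G H \<Longrightarrow> gconv G x y \<in> galg_sub G H"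
  using gsupp_gconv_subset[of x y] mono_set_mult[of "gsupp G x" H "gsupp G y" H G]
    subgroup_mult_id[of H]
  by (auto simp: galg_sub_eq gconv_in_galg)

lemma (in group) gdelta_one_in_galg_sub: "subgroup H G \<Longrightarrow> gdelta G \<one> \<in> galg_sub G H"
  by (auto simp: galg_sub_def galg_def gdelta_def subgroup.one_closed)

lemma (in group) gpow_in_galg_sub:
  "subgroup H G \<Longrightarrow> x \<in> galg_sub G H \<Longrightarrow> gpow G x k \<in> galg_sub G H"
  by (induction k) (simp_all add: gdelta_one_in_galg_sub gconv_in_galg_sub)

locale finite_group = group G for G :: "('a, 'b) monoid_scheme" (structure) +
  assumes finite_carrier: "finite (carrier G)"
begin

lemma gconv_assoc: "gconv G (gconv G x y) z = gconv G x (gconv G y z)"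
proof
  fix g
  show "gconv G (gconv G x y) z g = gconv G x (gconv G y z) g"
  proof (cases "g \<in> carrier G")
    case g: True
    have translate: "(\<Sum>h\<in>carrier G. y (inv k \<otimes> h) * z (inv h \<otimes> g)) =
        (\<Sum>h\<in>carrier G. y h * z (inv h \<otimes> (inv k \<otimes> g)))" if k: "k \<in> carrier G" for k
    proof -
      have "(\<Sum>h\<in>carrier G. y (inv k \<otimes> h) * z (inv h \<otimes> g)) =
          (\<Sum>h\<in>carrier G. y (inv k \<otimes> (k \<otimes> h)) * z (inv (k \<otimes> h) \<otimes> g))"
        using sum_carrier_translate[OF k, of "\<lambda>h. y (inv k \<otimes> h) * z (inv h \<otimes> g)"] by simp
      also have "\<dots> = (\<Sum>h\<in>carrier G. y h * z (inv h \<otimes> (inv k \<otimes> g)))"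
        using k g by (intro sum.cong refl) (simp add: inv_mult_group m_assoc[symmetric])
      finally show ?thesis .
    qed
    have "gconv G (gconv G x y) z g =
        (\<Sum>h\<in>carrier G. \<Sum>k\<in>carrier G. x k * y (inv k \<otimes> h) * z (inv h \<otimes> g))"
      using g by (simp add: gconv_eq_sum sum_distrib_right)
    also have "\<dots> = (\<Sum>k\<in>carrier G. x k * (\<Sum>h\<in>carrier G. y (inv k \<otimes> h) * z (inv h \<otimes> g)))"
      by (subst sum.swap) (simp add: sum_distrib_left mult.assoc)
    also have "\<dots> = gconv G x (gconv G y z) g"
      using g by (simp add: gconv_eq_sum translate)
    finally show ?thesis .
  qed (simp add: gconv_outside)
qed

lemma gconv_gdelta_left: "z \<in> galg G \<Longrightarrow> gconv G (gdelta G \<one>) z = z"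
  by (rule ext) (auto simp: gconv_def gdelta_def galg_def if_distrib[of "\<lambda>c. c * _"]
      finite_carrier cong: if_cong)

lemma gconv_gdelta_right: "z \<in> galg G \<Longrightarrow> gconv G z (gdelta G \<one>) = z"
proof
  fix g assume z: "z \<in> galg G"
  show "gconv G z (gdelta G \<one>) g = z g"
  proof (cases "g \<in> carrier G")
    case True
    then show ?thesis
      by (simp add: gconv_eq_sum_right gdelta_def if_distrib[of "\<lambda>c. _ * c"] finite_carrier
          cong: if_cong)
  qed (use z in \<open>simp add: gconv_outside galg_def\<close>)
qed

lemma gpow_add: "gpow G x (a + b) = gconv G (gpow G x a) (gpow G x b)"
  by (induction b) (simp_all add: gconv_gdelta_right gpow_in_galg gconv_assoc)

lemma gpow_mult: "gpow G x (a * b) = gpow G (gpow G x a) b"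
proof (induction b)
  case (Suc b)
  have "gpow G x (a * Suc b) = gpow G x (a * b + a)" by (simp add: add.commute)
  then show ?case using Suc by (simp only: gpow_add) simp
qed simp

lemma gpow_commute: "gconv G (gpow G x a) (gpow G x b) = gconv G (gpow G x b) (gpow G x a)"
  by (metis gpow_add add.commute)

lemma sum_gconv:
  "(\<Sum>g\<in>carrier G. gconv G x y g) = (\<Sum>g\<in>carrier G. x g) * (\<Sum>g\<in>carrier G. y g)"
proof -
  have "(\<Sum>g\<in>carrier G. gconv G x y g) = (\<Sum>g\<in>carrier G. \<Sum>h\<in>carrier G. x h * y (inv h \<otimes> g))"
    by (simp add: gconv_eq_sum)
  also have "\<dots> = (\<Sum>h\<in>carrier G. x h * (\<Sum>g\<in>carrier G. y (inv h \<otimes> g)))"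
    by (subst sum.swap) (simp add: sum_distrib_left)
  also have "\<dots> = (\<Sum>h\<in>carrier G. x h * (\<Sum>g\<in>carrier G. y g))"
    by (simp add: sum_carrier_translate)
  finally show ?thesis by (simp add: sum_distrib_right)
qed

lemma sum_gpow: "(\<Sum>g\<in>carrier G. gpow G x k g) = (\<Sum>g\<in>carrier G. x g) ^ k"
  by (induction k) (simp_all add: gdelta_def sum.delta finite_carrier sum_gconv)

lemma gsupp_gconv:
  assumes "\<And>g. 0 \<le> x g" and "\<And>g. 0 \<le> y g"
  shows "gsupp G (gconv G x y) = gsupp G x <#> gsupp G y"
proof
  show "gsupp G x <#> gsupp G y \<subseteq> gsupp G (gconv G x y)"
  proof
    fix g assume "g \<in> gsupp G x <#> gsupp G y"
    then obtain a b where ab: "g = a \<otimes> b" "a \<in> carrier G" "b \<in> carrier G" "x a \<noteq> 0" "y b \<noteq> 0"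
      by (auto simp: set_mult_def gsupp_def)
    have "0 < x a * y (inv a \<otimes> g)"
      using ab assms by (simp add: m_assoc[symmetric] less_le)
    also have "\<dots> \<le> gconv G x y g"
      using ab assms by (simp add: gconv_eq_sum) (intro member_le_sum, auto simp: finite_carrier)
    finally show "g \<in> gsupp G (gconv G x y)"
      using ab by (simp add: gsupp_def)
  qed
qed (rule gsupp_gconv_subset)

lemma galg_le_sum:
  assumes "z \<in> galg G" and "\<And>h. 0 \<le> z h" shows "z g \<le> (\<Sum>h\<in>carrier G. z h)"
proof (cases "g \<in> carrier G")
  case True
  then show ?thesis using assms by (intro member_le_sum) (auto simp: finite_carrier)
qed (use assms in \<open>simp add: galg_def sum_nonneg\<close>)

lemma simplexS_le_1: "x \<in> simplexS G \<Longrightarrow> x g \<le> 1"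
  using galg_le_sum[of x g] simplexS_nonneg[of x G] by (simp add: simplexS_def)

lemma gconv_in_simplexS:
  assumes "x \<in> simplexS G" and "y \<in> simplexS G" shows "gconv G x y \<in> simplexS G"
proof -
  have "0 \<le> gconv G x y g" for g
    using assms by (intro gconv_nonneg simplexS_nonneg)
  then show ?thesis
    using assms by (simp add: simplexS_def gconv_in_galg sum_gconv)
qed

lemma gdelta_one_in_simplexS: "gdelta G \<one> \<in> simplexS G"
  by (auto simp: simplexS_def galg_def gdelta_def finite_carrier)

lemma gpow_in_simplexS: "x \<in> simplexS G \<Longrightarrow> gpow G x k \<in> simplexS G"
  by (induction k) (simp_all add: gdelta_one_in_simplexS gconv_in_simplexS)

end

section \<open>The uniform distribution on a subgroup\<close>

definition uniform_dist :: "'a set \<Rightarrow> 'a \<Rightarrow> real" where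
  "uniform_dist H = (\<lambda>g. if g \<in> H then 1 / real (card H) else 0)"

lemma (in group) subgroup_translate_mem_iff:
  assumes "subgroup H G" and "k \<in> H" and "g \<in> carrier G"
  shows "inv k \<otimes> g \<in> H \<longleftrightarrow> g \<in> H" and "g \<otimes> inv k \<in> H \<longleftrightarrow> g \<in> H"
proof -
  interpret H: subgroup H G by fact
  have k: "k \<in> carrier G" using assms(2) by simp
  have "g = k \<otimes> (inv k \<otimes> g)"
    using k assms(3) by (simp add: m_assoc[symmetric])
  moreover have "g = (g \<otimes> inv k) \<otimes> k"
    using k assms(3) by (simp add: m_assoc)
  ultimately show "inv k \<otimes> g \<in> H \<longleftrightarrow> g \<in> H" and "g \<otimes> inv k \<in> H \<longleftrightarrow> g \<in> H"
    using assms(2) by (metis H.m_closed H.m_inv_closed)+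
qed

context finite_group
begin

lemma card_subgroup_pos: "subgroup H G \<Longrightarrow> 0 < card H"
  by (rule subgroup.finite_imp_card_positive[OF _ finite_carrier])

lemma uniform_dist_in_galg_sub: "subgroup H G \<Longrightarrow> uniform_dist H \<in> galg_sub G H"
  by (auto simp: galg_sub_def galg_def uniform_dist_def dest: subgroup.mem_carrier)

lemma gsupp_uniform_dist: "subgroup H G \<Longrightarrow> gsupp G (uniform_dist H) = H"
  using card_subgroup_pos by (auto simp: gsupp_def uniform_dist_def dest: subgroup.mem_carrier)

lemma sum_uniform_dist: "subgroup H G \<Longrightarrow> (\<Sum>g\<in>carrier G. uniform_dist H g) = 1"
  using card_subgroup_pos[of H] subgroup.subset[of H G]
  by (simp add: uniform_dist_def sum.If_cases finite_carrier Int_absorb1)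

lemma gconv_uniform_dist_right:
  assumes H: "subgroup H G" and z: "z \<in> galg_sub G H"
  shows "gconv G z (uniform_dist H) = (\<lambda>g. (\<Sum>h\<in>carrier G. z h) * uniform_dist H g)"
proof
  fix g
  show "gconv G z (uniform_dist H) g = (\<Sum>h\<in>carrier G. z h) * uniform_dist H g"
  proof (cases "g \<in> carrier G")
    case g: True
    have translate: "z h * uniform_dist H (inv h \<otimes> g) = z h * uniform_dist H g" for h
      using z subgroup_translate_mem_iff(1)[OF H _ g, of h]
      by (cases "z h = 0") (auto simp: galg_sub_def uniform_dist_def)
    show ?thesis by (simp add: gconv_eq_sum[OF g] sum_distrib_right translate)
  qed (use H in \<open>auto simp: gconv_outside uniform_dist_def dest: subgroup.mem_carrier\<close>)
qed

lemma gconv_uniform_dist_left: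
  assumes H: "subgroup H G" and z: "z \<in> galg_sub G H"
  shows "gconv G (uniform_dist H) z = (\<lambda>g. (\<Sum>h\<in>carrier G. z h) * uniform_dist H g)"
proof
  fix g
  show "gconv G (uniform_dist H) z g = (\<Sum>h\<in>carrier G. z h) * uniform_dist H g"
  proof (cases "g \<in> carrier G")
    case g: True
    have translate: "uniform_dist H (g \<otimes> inv k) * z k = uniform_dist H g * z k" for k
      using z subgroup_translate_mem_iff(2)[OF H _ g, of k]
      by (cases "z k = 0") (auto simp: galg_sub_def uniform_dist_def)
    show ?thesis
      by (simp only: gconv_eq_sum_right[OF g] translate) (simp add: sum_distrib_left mult.commute)
  qed (use H in \<open>auto simp: gconv_outside uniform_dist_def dest: subgroup.mem_carrier\<close>)
qed

lemma gpow_uniform_dist_plus: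
  assumes H: "subgroup H G" and u: "u \<in> galg_sub G H" "(\<Sum>h\<in>carrier G. u h) = 1 - a"
  shows "gpow G (\<lambda>g. a * uniform_dist H g + u g) k
    = (\<lambda>g. (1 - (1 - a) ^ k) * uniform_dist H g + gpow G u k g)"
proof (induction k)
  case 0
  then show ?case by simp
next
  case (Suc k)
  let ?c = "uniform_dist H" and ?y = "\<lambda>g. a * uniform_dist H g + u g"
  have "?y \<in> galg_sub G H"
    using u(1) uniform_dist_in_galg_sub[OF H]
    by (auto simp: galg_sub_def galg_def) (metis add.left_neutral mult_zero_right)
  moreover have "(\<Sum>h\<in>carrier G. ?y h) = 1"
    using u(2) sum_uniform_dist[OF H] by (simp add: sum.distrib sum_distrib_left[symmetric])
  ultimately have cy: "gconv G ?c ?y = ?c"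
    using gconv_uniform_dist_left[OF H] by simp
  have uc: "gconv G (gpow G u k) ?c = (\<lambda>g. (1 - a) ^ k * ?c g)"
    using gconv_uniform_dist_right[OF H gpow_in_galg_sub[OF H u(1)]] by (simp add: sum_gpow u(2))
  have "gpow G ?y (Suc k) = gconv G (\<lambda>g. (1 - (1 - a) ^ k) * ?c g + gpow G u k g) ?y"
    using Suc by simp
  also have "\<dots> = (\<lambda>g. (1 - (1 - a) ^ k) * gconv G ?c ?y g + gconv G (gpow G u k) ?y g)"
    by (simp only: gconv_add_left gconv_scale_left)
  also have "gconv G (gpow G u k) ?y = (\<lambda>g. a * (1 - a) ^ k * ?c g + gpow G u (Suc k) g)"
    by (simp add: gconv_add_right gconv_scale_right uc mult.assoc)
  finally show ?case unfolding cy by (simp add: algebra_simps)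
qed

text \<open>The witness is a = |H| min_H y, the largest a with a uniform_dist H \<le> y.\<close>
lemma simplexS_dominates_uniform_dist:
  assumes H: "subgroup H G" and y: "y \<in> simplexS G" "gsupp G y = H"
  obtains a u where "0 < a" and "a \<le> 1" and "u \<in> galg_sub G H" and "\<And>g. 0 \<le> u g"
    and "(\<Sum>h\<in>carrier G. u h) = 1 - a" and "y = (\<lambda>g. a * uniform_dist H g + u g)"
proof -
  let ?c = "uniform_dist H"
  define a where "a = real (card H) * Min (y ` H)"
  define u where "u = (\<lambda>g. y g - a * ?c g)"
  have fin: "finite H" and card: "0 < card H"
    using card_subgroup_pos[OF H] card_gt_0_iff by blast+
  have "0 < y g" if "g \<in> H" for g
    using that y simplexS_nonneg[of y G g] by (force simp: gsupp_def)
  then have "0 < Min (y ` H)"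
    using fin card by (subst Min_gr_iff) auto
  then have a_pos: "0 < a" using card by (simp add: a_def)
  have u_out: "u g = 0" if "g \<notin> H" for g
  proof -
    have "y g = 0" using that y by (auto simp: gsupp_def simplexS_def galg_def)
    then show ?thesis using that by (simp add: u_def uniform_dist_def)
  qed
  have u_nonneg: "0 \<le> u g" for g
  proof (cases "g \<in> H")
    case True
    then have "Min (y ` H) \<le> y g" using fin by simp
    then show ?thesis using True card by (simp add: u_def a_def uniform_dist_def)
  qed (simp add: u_out)
  have u_sub: "u \<in> galg_sub G H"
    using u_out subgroup.subset[OF H] by (auto simp: galg_sub_def galg_def)
  have u_sum: "(\<Sum>h\<in>carrier G. u h) = 1 - a"
    using y(1) sum_uniform_dist[OF H]
    by (simp add: u_def sum_subtractf sum_distrib_left[symmetric] simplexS_def)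
  have a_le: "a \<le> 1"
    using u_sum sum_nonneg[of "carrier G" u] u_nonneg by simp
  show ?thesis
    using a_pos a_le u_sub u_nonneg u_sum by (rule that) (simp add: u_def fun_eq_iff)
qed

lemma gpow_tendsto_uniform_dist:
  assumes H: "subgroup H G" and y: "y \<in> simplexS G" "gsupp G y = H"
  shows "(\<lambda>k. gpow G y k) \<longlonglongrightarrow> uniform_dist H"
proof -
  let ?c = "uniform_dist H"
  obtain a u where a: "0 < a" "a \<le> 1" and u: "u \<in> galg_sub G H" "\<And>g. 0 \<le> u g"
    and u_sum: "(\<Sum>h\<in>carrier G. u h) = 1 - a" and y_eq: "y = (\<lambda>g. a * ?c g + u g)"
    using simplexS_dominates_uniform_dist[OF H y] by blast
  have u_pow: "0 \<le> gpow G u k g \<and> gpow G u k g \<le> (1 - a) ^ k" for k g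
  proof -
    have nonneg: "0 \<le> gpow G u k h" for h
      using u(2) by (rule gpow_nonneg)
    have "gpow G u k g \<le> (\<Sum>h\<in>carrier G. gpow G u k h)"
      by (rule galg_le_sum[OF gpow_in_galg nonneg])
    then show ?thesis using nonneg by (simp add: sum_gpow u_sum)
  qed
  have geom: "(\<lambda>k. (1 - a) ^ k) \<longlonglongrightarrow> 0"
    using a by (intro LIMSEQ_power_zero) simp
  have u_lim: "(\<lambda>k. gpow G u k g) \<longlonglongrightarrow> 0" for g
    using u_pow by (intro tendsto_sandwich[OF _ _ tendsto_const geom]) auto
  have "(\<lambda>k. (1 - (1 - a) ^ k) * ?c g + gpow G u k g) \<longlonglongrightarrow> (1 - 0) * ?c g + 0" for g
    by (intro tendsto_add tendsto_mult tendsto_diff tendsto_const geom u_lim)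
  then show ?thesis
    unfolding tendsto_fun_iff y_eq gpow_uniform_dist_plus[OF H u(1) u_sum] by simp
qed

end

section \<open>Supports of the powers of an element of S\<close>

lemma (in group) subgroup_G_x: "subgroup (G_x G x) G"
  unfolding G_x_def by (rule generate_is_subgroup) (auto simp: gsupp_def)

lemma c_x_eq_uniform_dist: "c_x G x = uniform_dist (G_x G x)"
  by (simp add: c_x_def uniform_dist_def)

context finite_group
begin

lemma c_x_in_galg_sub: "c_x G x \<in> galg_sub G (G_x G x)"
  using uniform_dist_in_galg_sub[OF subgroup_G_x] by (simp add: c_x_eq_uniform_dist)

lemma gsupp_gpow_add:
  assumes "x \<in> simplexS G"
  shows "gsupp G (gpow G x (a + b)) = gsupp G (gpow G x a) <#> gsupp G (gpow G x b)"
  using simplexS_nonneg[OF gpow_in_simplexS[OF assms]] by (simp add: gpow_add gsupp_gconv)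

lemma pow_in_gsupp_gpow:
  assumes x: "x \<in> simplexS G" and a: "a \<in> gsupp G x"
  shows "a [^] k \<in> gsupp G (gpow G x k)"
proof (induction k)
  case 0
  then show ?case by (simp add: gsupp_def gdelta_def)
next
  case (Suc k)
  have "a [^] k \<otimes> a \<in> gsupp G (gpow G x k) <#> gsupp G (gpow G x 1)"
    using Suc a x by (auto simp: gconv_gdelta_left simplexS_def set_mult_def)
  then show ?case using gsupp_gpow_add[OF x, of k 1] by simp
qed

lemma n_x_properties:
  assumes x: "x \<in> simplexS G"
  shows "1 \<le> n_x G x" and "\<one> \<in> gsupp G (gpow G x (n_x G x))"
proof -
  have "(\<Sum>g\<in>carrier G. x g) \<noteq> 0" using x by (simp add: simplexS_def)
  then obtain a where "a \<in> carrier G" "x a \<noteq> 0"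
    by (rule sum.not_neutral_contains_not_neutral)
  then have "a [^] order G \<in> gsupp G (gpow G x (order G))"
    by (intro pow_in_gsupp_gpow[OF x]) (simp add: gsupp_def)
  then have "\<one> \<in> gsupp G (gpow G x (order G))"
    using \<open>a \<in> carrier G\<close> by (simp add: pow_order_eq_1)
  moreover have "1 \<le> order G"
    using finite_carrier order_gt_0_iff_finite by (simp add: Suc_le_eq)
  ultimately have "\<exists>k. 1 \<le> k \<and> gpow G x k \<one> \<noteq> 0"
    by (auto simp: gsupp_def)
  from LeastI_ex[OF this] show "1 \<le> n_x G x" and "\<one> \<in> gsupp G (gpow G x (n_x G x))"
    by (simp_all add: n_x_def gsupp_def)
qed

lemma gsupp_gpow_eq_G_x:
  assumes x: "x \<in> simplexS G"
  obtains M where "1 \<le> M" and "gsupp G (gpow G x M) = G_x G x"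
proof -
  let ?Q = "\<lambda>j. gsupp G (gpow G x (n_x G x * j))"
  have "\<exists>j\<ge>1. ?Q j = generate G (?Q 1)"
  proof (rule set_mult_additive_family_reaches_generate[OF finite_carrier])
    show "?Q i \<subseteq> carrier G" for i by (auto simp: gsupp_def)
    show "?Q (i + j) = ?Q i <#> ?Q j" for i j
      using gsupp_gpow_add[OF x] by (simp add: distrib_left)
    show "\<one> \<in> ?Q 1" using n_x_properties[OF x] by simp
  qed
  then obtain j where "1 \<le> j" "?Q j = G_x G x"
    by (auto simp: G_x_def)
  then show ?thesis using n_x_properties(1)[OF x] by (intro that[of "n_x G x * j"]) auto
qed

lemma m_x_properties:
  assumes x: "x \<in> simplexS G"
  shows "1 \<le> m_x G x" and "gsupp G (gpow G x (m_x G x)) \<subseteq> G_x G x"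
proof -
  obtain M where "1 \<le> M" "gsupp G (gpow G x M) = G_x G x"
    using gsupp_gpow_eq_G_x[OF x] .
  then have "\<exists>k. 1 \<le> k \<and> gsupp G (gpow G x k) \<subseteq> G_x G x" by auto
  from LeastI_ex[OF this] show "1 \<le> m_x G x" and "gsupp G (gpow G x (m_x G x)) \<subseteq> G_x G x"
    by (simp_all add: m_x_def)
qed

lemma m_x_eq_1_iff:
  assumes x: "x \<in> simplexS G"
  shows "m_x G x = 1 \<longleftrightarrow> x \<in> galg_sub G (G_x G x)"
proof
  assume "m_x G x = 1"
  then show "x \<in> galg_sub G (G_x G x)"
    using m_x_properties(2)[OF x] x by (simp add: gconv_gdelta_left galg_sub_eq simplexS_def)
next
  assume "x \<in> galg_sub G (G_x G x)"
  then have "m_x G x \<le> 1"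
    unfolding m_x_def using x by (intro Least_le) (simp add: gconv_gdelta_left galg_sub_eq simplexS_def)
  then show "m_x G x = 1" using m_x_properties(1)[OF x] by simp
qed

lemma gconv_c_x_absorb:
  assumes "z \<in> simplexS G" and "z \<in> galg_sub G (G_x G x)"
  shows "gconv G (c_x G x) z = c_x G x"
  using assms gconv_uniform_dist_left[OF subgroup_G_x, of z x]
  by (simp add: c_x_eq_uniform_dist simplexS_def)

lemma gconv_c_x_gpow_mod:
  assumes x: "x \<in> simplexS G"
  shows "gconv G (c_x G x) (gpow G x m) = gconv G (c_x G x) (gpow G x (m mod m_x G x))"
proof -
  let ?c = "c_x G x" and ?d = "m_x G x"
  have period: "gconv G ?c (gpow G x (?d * q)) = ?c" for q
  proof (induction q)
    case 0
    then show ?case using c_x_in_galg_sub[of x] by (simp add: gconv_gdelta_right galg_sub_def)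
  next
    case (Suc q)
    have "gconv G ?c (gpow G x (?d * Suc q)) = gconv G ?c (gpow G x (?d * q + ?d))"
      by (simp add: add.commute)
    also have "\<dots> = gconv G (gconv G ?c (gpow G x (?d * q))) (gpow G x ?d)"
      by (simp only: gpow_add gconv_assoc)
    also have "\<dots> = ?c"
      using Suc m_x_properties(2)[OF x] gpow_in_simplexS[OF x]
      by (simp add: gconv_c_x_absorb galg_sub_eq simplexS_def)
    finally show ?case .
  qed
  have "gpow G x m = gconv G (gpow G x (?d * (m div ?d))) (gpow G x (m mod ?d))"
    by (simp flip: gpow_add)
  then show ?thesis by (simp add: gconv_assoc[symmetric] period)
qed

end

section \<open>Limits of the powers\<close>

context finite_group
begin

lemma gpow_gpow_tendsto_c_x:
  assumes x: "x \<in> simplexS G"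
  obtains M where "1 \<le> M" and "gsupp G (gpow G x M) = G_x G x"
    and "(\<lambda>k. gpow G (gpow G x M) k) \<longlonglongrightarrow> c_x G x"
proof -
  obtain M where "1 \<le> M" and M: "gsupp G (gpow G x M) = G_x G x"
    using gsupp_gpow_eq_G_x[OF x] .
  moreover have "(\<lambda>k. gpow G (gpow G x M) k) \<longlonglongrightarrow> c_x G x"
    unfolding c_x_eq_uniform_dist
    by (rule gpow_tendsto_uniform_dist[OF subgroup_G_x gpow_in_simplexS[OF x] M])
  ultimately show ?thesis by (rule that)
qed

lemma gconv_c_x_commute:
  assumes x: "x \<in> simplexS G"
  shows "gconv G x (c_x G x) = gconv G (c_x G x) x"
proof -
  obtain M where M: "(\<lambda>k. gpow G (gpow G x M) k) \<longlonglongrightarrow> c_x G x"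
    using gpow_gpow_tendsto_c_x[OF x] by blast
  have "(\<lambda>k. gconv G x (gpow G (gpow G x M) k)) \<longlonglongrightarrow> gconv G x (c_x G x)"
    by (rule tendsto_gconv[OF tendsto_const M])
  moreover have "(\<lambda>k. gconv G x (gpow G (gpow G x M) k)) \<longlonglongrightarrow> gconv G (c_x G x) x"
  proof -
    have "gconv G x (gpow G (gpow G x M) k) = gconv G (gpow G (gpow G x M) k) x" for k
      using gpow_commute[of x 1 "M * k"] x
      by (simp add: gpow_mult gconv_gdelta_left simplexS_def)
    then show ?thesis using tendsto_gconv[OF M tendsto_const[of x]] by simp
  qed
  ultimately show ?thesis
    by (rule tendsto_fun_unique) simp
qed

text \<open>Writing m = M q + s with x^M supported on G_x, one has x^m - c_x x^m = (y^q - c_x) x^s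
  for y = x^M, and y^q tends to c_x.\<close>
lemma gpow_minus_c_x_tendsto_0:
  assumes x: "x \<in> simplexS G"
  shows "(\<lambda>m. gpow G x m g - gconv G (c_x G x) (gpow G x m) g) \<longlonglongrightarrow> 0"
proof -
  let ?c = "c_x G x"
  obtain M where M: "1 \<le> M" "gsupp G (gpow G x M) = G_x G x"
    and y_lim: "(\<lambda>q. gpow G (gpow G x M) q) \<longlonglongrightarrow> ?c"
    using gpow_gpow_tendsto_c_x[OF x] .
  define y where "y = gpow G x M"
  define e where "e = (\<lambda>q. \<Sum>h\<in>carrier G. \<bar>gpow G y q h - ?c h\<bar>)"
  have "e \<longlonglongrightarrow> (\<Sum>h\<in>carrier G. \<bar>?c h - ?c h\<bar>)"
    using y_lim unfolding e_def y_def tendsto_fun_iff by (intro tendsto_intros) auto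
  then have e_lim: "(\<lambda>m. e (m div M)) \<longlonglongrightarrow> 0"
    using M(1) by (intro filterlim_compose[OF _ filterlim_at_top_div_const_nat]) auto
  have bound: "\<bar>gpow G x m g - gconv G ?c (gpow G x m) g\<bar> \<le> e (m div M)" for m
  proof -
    let ?q = "m div M" and ?s = "m mod M"
    have y: "y \<in> simplexS G" "y \<in> galg_sub G (G_x G x)"
      using gpow_in_simplexS[OF x] M(2) by (auto simp: y_def galg_sub_eq simplexS_def)
    have x_m: "gpow G x m = gconv G (gpow G y ?q) (gpow G x ?s)"
      by (simp add: y_def flip: gpow_mult gpow_add)
    have "gconv G ?c (gpow G y ?q) = ?c"
      using y by (intro gconv_c_x_absorb gpow_in_simplexS gpow_in_galg_sub[OF subgroup_G_x])
    then have "gpow G x m g - gconv G ?c (gpow G x m) g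
        = gconv G (\<lambda>h. gpow G y ?q h - ?c h) (gpow G x ?s) g"
      by (simp add: x_m gconv_diff_left gconv_assoc[symmetric])
    also have "\<bar>\<dots>\<bar> \<le> e ?q"
    proof (unfold e_def, rule abs_gconv_le)
      fix h
      show "\<bar>gpow G x ?s h\<bar> \<le> 1"
        using simplexS_nonneg[OF gpow_in_simplexS[OF x], of ?s h]
          simplexS_le_1[OF gpow_in_simplexS[OF x], of ?s h] by simp
    qed
    finally show ?thesis .
  qed
  have "\<forall>\<^sub>F m in sequentially. norm (gpow G x m g - gconv G ?c (gpow G x m) g) \<le> e (m div M)"
    using bound by simp
  then show ?thesis using e_lim by (rule Lim_null_comparison)
qed

lemma tendsto_gpow_iff_tendsto_gconv_c_x:
  assumes x: "x \<in> simplexS G" and m: "filterlim m at_top F"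
  shows "((\<lambda>k. gpow G x (m k)) \<longlongrightarrow> L) F \<longleftrightarrow>
    ((\<lambda>k. gconv G (c_x G x) (gpow G x (m k mod m_x G x))) \<longlongrightarrow> L) F"
proof -
  have "((\<lambda>k. gpow G x (m k) g - gconv G (c_x G x) (gpow G x (m k)) g) \<longlongrightarrow> 0) F" for g
    using filterlim_compose[OF gpow_minus_c_x_tendsto_0[OF x] m] .
  then show ?thesis
    unfolding tendsto_fun_iff gconv_c_x_gpow_mod[OF x, symmetric]
    by (blast intro: Lim_transform Lim_transform2)
qed

lemma limset_eq:
  assumes x: "x \<in> simplexS G"
  shows "limset G x = (\<lambda>r. gconv G (c_x G x) (gpow G x r)) ` {0..<m_x G x}"
    (is "_ = ?P")
proof (intro equalityI subsetI)
  let ?d = "m_x G x"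
  fix L assume "L \<in> limset G x"
  then obtain \<sigma> where \<sigma>: "strict_mono \<sigma>" and lim: "(\<lambda>k. gpow G x (Suc (\<sigma> k))) \<longlonglongrightarrow> L"
    by (auto simp: limset_def)
  have "filterlim (\<lambda>k. Suc (\<sigma> k)) at_top sequentially"
    using filterlim_compose[OF filterlim_Suc filterlim_subseq[OF \<sigma>]] by simp
  then have "(\<lambda>k. gconv G (c_x G x) (gpow G x (Suc (\<sigma> k) mod ?d))) \<longlonglongrightarrow> L"
    using lim tendsto_gpow_iff_tendsto_gconv_c_x[OF x] by blast
  moreover have "closedin euclidean ?P"
    using Hausdorff_imp_t1_space[OF Hausdorff_space_fun] by (auto simp: t1_space_closedin_finite)
  moreover have "Suc (\<sigma> k) mod ?d < ?d" for k
    using m_x_properties(1)[OF x] by simp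
  ultimately show "L \<in> ?P"
    by (intro limitin_closedin[of euclidean]) auto
next
  let ?d = "m_x G x"
  fix L assume "L \<in> ?P"
  then obtain r where r: "r < ?d" "L = gconv G (c_x G x) (gpow G x r)"
    by auto
  define \<sigma> where "\<sigma> = (\<lambda>k. ?d * Suc k + r - 1)"
  have d: "1 \<le> ?d" using m_x_properties(1)[OF x] .
  have Suc_\<sigma>: "Suc (\<sigma> k) = r + ?d * Suc k" for k
    using d by (simp add: \<sigma>_def)
  have \<sigma>: "strict_mono \<sigma>"
    using d by (auto simp: strict_mono_Suc_iff \<sigma>_def)
  have Suc_\<sigma>_lim: "filterlim (\<lambda>k. Suc (\<sigma> k)) at_top sequentially"
    using filterlim_compose[OF filterlim_Suc filterlim_subseq[OF \<sigma>]] by simp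
  have periodic: "gconv G (c_x G x) (gpow G x (Suc (\<sigma> k) mod ?d)) = L" for k
    using r by (simp only: Suc_\<sigma> mod_mult_self2) simp
  have "(\<lambda>k. gpow G x (Suc (\<sigma> k))) \<longlonglongrightarrow> L"
    unfolding tendsto_gpow_iff_tendsto_gconv_c_x[OF x Suc_\<sigma>_lim] periodic by simp
  with \<sigma> show "L \<in> limset G x"
    by (auto simp: limset_def)
qed

lemma gconv_c_x_neq_c_x:
  assumes x: "x \<in> simplexS G" and not_sub: "x \<notin> galg_sub G (G_x G x)"
  shows "gconv G (c_x G x) x \<noteq> c_x G x"
proof
  assume eq: "gconv G (c_x G x) x = c_x G x"
  have gsupp_c: "gsupp G (c_x G x) = G_x G x"
    by (simp add: c_x_eq_uniform_dist gsupp_uniform_dist subgroup_G_x)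
  have "gsupp G x \<subseteq> G_x G x <#> gsupp G x"
    using subgroup.one_closed[OF subgroup_G_x] by (force simp: set_mult_def gsupp_def)
  also have "\<dots> = gsupp G (gconv G (c_x G x) x)"
    using x gsupp_c by (simp add: gsupp_gconv simplexS_nonneg c_x_def)
  finally have "gsupp G x \<subseteq> G_x G x"
    using eq gsupp_c by simp
  then show False
    using x not_sub by (simp add: galg_sub_eq simplexS_def)
qed

lemma c_x_in_limset:
  assumes x: "x \<in> simplexS G"
  shows "c_x G x \<in> limset G x"
proof -
  have "gconv G (c_x G x) (gpow G x 0) = c_x G x"
    using c_x_in_galg_sub[of x] by (simp add: gconv_gdelta_right galg_sub_def)
  then show ?thesis
    unfolding limset_eq[OF x] using m_x_properties(1)[OF x] by (intro image_eqI[of _ _ 0]) auto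
qed

lemma limset_eq_singleton_iff:
  assumes x: "x \<in> simplexS G"
  shows "limset G x = {c_x G x} \<longleftrightarrow> x \<in> galg_sub G (G_x G x)"
proof
  assume "x \<in> galg_sub G (G_x G x)"
  then have "m_x G x = 1" using m_x_eq_1_iff[OF x] by simp
  then show "limset G x = {c_x G x}"
    using c_x_in_limset[OF x] by (auto simp: limset_eq[OF x])
next
  assume lim: "limset G x = {c_x G x}"
  show "x \<in> galg_sub G (G_x G x)"
  proof (rule ccontr)
    assume not_sub: "x \<notin> galg_sub G (G_x G x)"
    then have "1 \<in> {0..<m_x G x}" using m_x_properties(1)[OF x] m_x_eq_1_iff[OF x] by simp
    then have "gconv G (c_x G x) (gpow G x 1) \<in> limset G x"
      unfolding limset_eq[OF x] by (rule imageI)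
    then show False
      using lim gconv_c_x_neq_c_x[OF x not_sub] x by (simp add: gconv_gdelta_left simplexS_def)
  qed
qed

end

theorem theorem1:
  fixes G :: "('a, 'b) monoid_scheme" and x :: "'a \<Rightarrow> real"
  assumes "group G" and "finite (carrier G)" and "x \<in> simplexS G"
  shows "gconv G x (c_x G x) = gconv G (c_x G x) x
    \<and> limset G x = (\<lambda>r. gconv G (c_x G x) (gpow G x r)) ` {0..<m_x G x}
    \<and> (card (limset G x) = 1 \<longleftrightarrow> x \<in> galg_sub G (G_x G x))
    \<and> (limset G x = {c_x G x} \<longleftrightarrow> x \<in> galg_sub G (G_x G x))"
proof -
  interpret finite_group G
    using assms(1,2) by (simp add: finite_group_def finite_group_axioms_def)
  have "card (limset G x) = 1 \<longleftrightarrow> limset G x = {c_x G x}"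
    using c_x_in_limset[OF assms(3)] by (auto simp: card_1_singleton_iff)
  then show ?thesis
    using gconv_c_x_commute limset_eq limset_eq_singleton_iff assms(3) by simp
qed

end
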